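(* Let $d>2$ be an integer and let $$\mathbb{E}=\bigcup\left\{\kappa_{p-1}+\frac{p}{d},\ \kappa_p-\frac{p}{d}\right\},$$ the union over all positive integers $p$ of which $d$ is a proper divisor (that is, $d$ divides $p$ and $d\neq p$). Then $$\lim_{k\to\infty}\frac{|\mathbb{E}\cap[1,k]|}{k^{1/(d+1)}}=\frac{\left[4(d+1)!\,\zeta(d)\right]^{1/(d+1)}}{d},$$ where $\zeta$ is the Riemann zeta function.
   Context: A point of $\mathbb{Z}^d$ is primitive if its coordinates are relatively prime; $\mathbb{P}^d_\circ$ denotes the set of primitive points of $\mathbb{Z}^d$ whose first non-zero coordinate is positive. For a finite $\mathcal{X}\subset\mathbb{R}^d$, $\kappa(\mathcal{X})=\max_{1\le i\le d}\sum_{x\in\mathcal{X}}|x_i|$. $B(d,p)=\{x\in\mathbb{R}^d:\|x\|_1\le p\}$ and $\kappa_p=\kappa(B(d,p)\cap\mathbb{P}^d_\circ)$. *)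

theory Defs
  imports "HOL-Analysis.Analysis"
begin

text \<open>Points of Z^d are encoded as functions nat => int vanishing outside {0..<d}
  (coordinate i+1 of the paper is x i).\<close>

definition lattice_pts :: "nat \<Rightarrow> (nat \<Rightarrow> int) set" where
  "lattice_pts d = {x. \<forall>i\<ge>d. x i = 0}"

definition primitive :: "nat \<Rightarrow> (nat \<Rightarrow> int) \<Rightarrow> bool" where
  "primitive d x \<longleftrightarrow> x \<in> lattice_pts d \<and> Gcd (x ` {..<d}) = 1"

definition prim_pos :: "nat \<Rightarrow> (nat \<Rightarrow> int) set" where
  "prim_pos d = {x. primitive d x \<and> (\<exists>i<d. x i > 0 \<and> (\<forall>j<i. x j = 0))}"

definition l1norm :: "nat \<Rightarrow> (nat \<Rightarrow> int) \<Rightarrow> int" where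
  "l1norm d x = (\<Sum>i<d. \<bar>x i\<bar>)"

definition ball1 :: "nat \<Rightarrow> nat \<Rightarrow> (nat \<Rightarrow> int) set" where
  "ball1 d p = {x \<in> lattice_pts d. l1norm d x \<le> int p}"

definition kappa_set :: "nat \<Rightarrow> (nat \<Rightarrow> int) set \<Rightarrow> int" where
  "kappa_set d X = Max ((\<lambda>i. \<Sum>x\<in>X. \<bar>x i\<bar>) ` {..<d})"

definition kappa :: "nat \<Rightarrow> nat \<Rightarrow> int" where
  "kappa d p = kappa_set d (ball1 d p \<inter> prim_pos d)"

definition Eset :: "nat \<Rightarrow> int set" where
  "Eset d = (\<Union>p\<in>{p. 0 < p \<and> d dvd p \<and> d \<noteq> p}.
              {kappa d (p - 1) + int p div int d, kappa d p - int p div int d})"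

definition zeta_nat :: "nat \<Rightarrow> real" where
  "zeta_nat s = (\<Sum>n. 1 / real (Suc n) ^ s)"

end

theory Submission
  imports Defs "HOL-Combinatorics.Transposition"
begin

text \<open>
  Summing the norm \<parallel>x\<parallel>_1 over the lattice points of B(d, p) gives 2^d d / (d+1)! p^(d+1) + o(p^(d+1)):
  the ball is counted slice by slice, and the norm sum is a Cesaro mean of these counts. Grouping the
  nonzero points by the gcd g of their coordinates writes the norm sum as \<Sum>_(g \<le> p) g W(p div g),
  where W(q) is the norm sum over the primitive points of B(d, q). Since
  \<Sum>_(g \<ge> 2) g^(-d) = \<zeta>(d) - 1 < 1 for d \<ge> 3, this relation can be inverted asymptotically by a
  contraction argument, so W(p) \<sim> 2^d d / ((d+1)! \<zeta>(d)) p^(d+1). The coordinates are interchangeable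
  and x \<mapsto> -x swaps the two halves of the primitive points, hence 2 d \<kappa>_p = W(p).

  For p = d q the two points \<kappa>_(p-1) + q < \<kappa>_p - q of E interleave strictly with those of the other
  multiples of d, because the eight primitive points \<plusminus>(p-1) e_1 \<plusminus> e_j (j = 2, 3) of norm p make \<kappa>
  jump by at least 4 q at p. So |E \<inter> [1, k]| is the sum of the counting functions of two increasing
  sequences that both grow like c q^(d+1), each contributing (k / c)^(1/(d+1)).
\<close>

section \<open>Power sums and Cesaro means\<close>

lemma Suc_power_diff_bounds:
  fixes m :: real
  assumes "0 \<le> m"
  shows "real (Suc k) * m ^ k \<le> (m + 1) ^ Suc k - m ^ Suc k"
    and "(m + 1) ^ Suc k - m ^ Suc k \<le> real (Suc k) * (m + 1) ^ k"
proof -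
  have eq: "(m + 1) ^ Suc k - m ^ Suc k = (\<Sum>i<Suc k. (m + 1) ^ i * m ^ (k - i))"
    using diff_power_eq_sum[of "m + 1" k m] by simp
  have "m ^ k \<le> (m + 1) ^ i * m ^ (k - i) \<and> (m + 1) ^ i * m ^ (k - i) \<le> (m + 1) ^ k"
    if "i < Suc k" for i
  proof -
    have "m ^ k = m ^ i * m ^ (k - i)" "(m + 1) ^ k = (m + 1) ^ i * (m + 1) ^ (k - i)"
      using that by (simp_all flip: power_add)
    then show ?thesis
      using assms by (auto intro!: mult_mono power_mono)
  qed
  then have "(\<Sum>i<Suc k. m ^ k) \<le> (\<Sum>i<Suc k. (m + 1) ^ i * m ^ (k - i))"
    and "(\<Sum>i<Suc k. (m + 1) ^ i * m ^ (k - i)) \<le> (\<Sum>i<Suc k. (m + 1) ^ k)"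
    by (intro sum_mono; simp)+
  then show "real (Suc k) * m ^ k \<le> (m + 1) ^ Suc k - m ^ Suc k"
    and "(m + 1) ^ Suc k - m ^ Suc k \<le> real (Suc k) * (m + 1) ^ k"
    unfolding eq by simp_all
qed

lemma sum_power_lessThan_bounds:
  shows "(\<Sum>m<n. real m ^ k) \<le> real n ^ Suc k / real (Suc k)"
    and "real n ^ Suc k / real (Suc k) - real n ^ k \<le> (\<Sum>m<n. real m ^ k)"
proof -
  have telescope: "(\<Sum>m<n. (real m + 1) ^ Suc k - real m ^ Suc k) = real n ^ Suc k"
    using sum_lessThan_telescope[of "\<lambda>m. real m ^ Suc k" n] by (simp add: add.commute)
  have "real (Suc k) * (\<Sum>m<n. real m ^ k) \<le> real n ^ Suc k"
    unfolding sum_distrib_left telescope[symmetric]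
    by (intro sum_mono Suc_power_diff_bounds(1)) simp
  then show "(\<Sum>m<n. real m ^ k) \<le> real n ^ Suc k / real (Suc k)"
    by (simp add: field_simps)
  have "real n ^ Suc k \<le> real (Suc k) * (\<Sum>m<n. (real m + 1) ^ k)"
    unfolding sum_distrib_left telescope[symmetric]
    by (intro sum_mono Suc_power_diff_bounds(2)) simp
  moreover have "(\<Sum>m<n. (real m + 1) ^ k) \<le> (\<Sum>m<n. real m ^ k) + real n ^ k"
    using sum.lessThan_Suc_shift[of "\<lambda>m. real m ^ k" n] by (simp add: add.commute)
  ultimately have "real n ^ Suc k \<le> real (Suc k) * ((\<Sum>m<n. real m ^ k) + real n ^ k)"
    by (meson mult_left_mono of_nat_0_le_iff order_trans)
  then show "real n ^ Suc k / real (Suc k) - real n ^ k \<le> (\<Sum>m<n. real m ^ k)"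
    by (simp add: field_simps)
qed

lemma sum_power_lessThan_asymp:
  "(\<lambda>n. (\<Sum>m<n. real m ^ k) / real n ^ Suc k) \<longlonglongrightarrow> 1 / real (Suc k)"
proof (rule tendsto_sandwich)
  show "\<forall>\<^sub>F n in sequentially. 1 / real (Suc k) - 1 / real n \<le> (\<Sum>m<n. real m ^ k) / real n ^ Suc k"
    using eventually_gt_at_top[of 0]
  proof eventually_elim
    case (elim n)
    have "1 / real (Suc k) - 1 / real n = (real n ^ Suc k / real (Suc k) - real n ^ k) / real n ^ Suc k"
      using elim by (simp add: diff_divide_distrib)
    also have "\<dots> \<le> (\<Sum>m<n. real m ^ k) / real n ^ Suc k"
      by (intro divide_right_mono sum_power_lessThan_bounds(2)) simp
    finally show ?case .
  qed
  show "\<forall>\<^sub>F n in sequentially. (\<Sum>m<n. real m ^ k) / real n ^ Suc k \<le> 1 / real (Suc k)"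
    using eventually_gt_at_top[of 0]
  proof eventually_elim
    case (elim n)
    have "(\<Sum>m<n. real m ^ k) / real n ^ Suc k \<le> (real n ^ Suc k / real (Suc k)) / real n ^ Suc k"
      by (intro divide_right_mono sum_power_lessThan_bounds(1)) simp
    then show ?case using elim by simp
  qed
  show "(\<lambda>n. 1 / real (Suc k) - 1 / real n) \<longlonglongrightarrow> 1 / real (Suc k)"
    using tendsto_diff[OF tendsto_const lim_inverse_n'] by (simp add: inverse_eq_divide)
qed simp

lemma sum_power_lessThan_le: "(\<Sum>m<n. real m ^ k) \<le> real n ^ Suc k"
proof -
  have "(\<Sum>m<n. real m ^ k) \<le> (\<Sum>m<n. real m ^ k) * real (Suc k)"
    by (simp add: ring_distribs sum_nonneg)
  also have "\<dots> \<le> real n ^ Suc k"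
    using sum_power_lessThan_bounds(1)[of k n] by (simp add: field_simps)
  finally show ?thesis .
qed

lemma abs_sum_lessThan_le:
  fixes g :: "nat \<Rightarrow> real"
  assumes "\<forall>m\<ge>N. \<bar>g m\<bar> \<le> r * real m ^ k" and "0 \<le> r"
  shows "\<bar>\<Sum>m<n. g m\<bar> \<le> (\<Sum>m<N. \<bar>g m\<bar>) + r * real n ^ Suc k"
proof -
  have "(\<Sum>m<n. \<bar>g m\<bar>)
      = (\<Sum>m\<in>{..<n} \<inter> {..<N}. \<bar>g m\<bar>) + (\<Sum>m\<in>{..<n} - {..<N}. \<bar>g m\<bar>)"
    by (metis finite_lessThan sum.Int_Diff)
  also have "(\<Sum>m\<in>{..<n} \<inter> {..<N}. \<bar>g m\<bar>) \<le> (\<Sum>m<N. \<bar>g m\<bar>)"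
    by (intro sum_mono2) auto
  also have "(\<Sum>m\<in>{..<n} - {..<N}. \<bar>g m\<bar>) \<le> (\<Sum>m\<in>{..<n} - {..<N}. r * real m ^ k)"
    using assms(1) by (intro sum_mono) auto
  also have "\<dots> \<le> (\<Sum>m<n. r * real m ^ k)"
    using assms(2) by (intro sum_mono2) auto
  also have "\<dots> \<le> r * real n ^ Suc k"
    using mult_left_mono[OF sum_power_lessThan_le assms(2)] by (simp add: sum_distrib_left)
  finally show ?thesis
    using sum_abs[of g "{..<n}"] by linarith
qed

lemma cesaro_power_zero:
  fixes g :: "nat \<Rightarrow> real"
  assumes "(\<lambda>n. g n / real n ^ k) \<longlonglongrightarrow> 0"
  shows "(\<lambda>n. (\<Sum>m<n. g m) / real n ^ Suc k) \<longlonglongrightarrow> 0"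
proof (rule tendstoI)
  fix r :: real
  assume "0 < r"
  have "\<forall>\<^sub>F m in sequentially. dist (g m / real m ^ k) 0 < r / 2"
    using \<open>0 < r\<close> by (intro tendstoD[OF assms]) simp
  then have "\<forall>\<^sub>F m in sequentially. \<bar>g m\<bar> \<le> r / 2 * real m ^ k"
    using eventually_gt_at_top[of 0]
    by eventually_elim (simp add: abs_divide divide_less_eq)
  then obtain N where N: "\<forall>m\<ge>N. \<bar>g m\<bar> \<le> r / 2 * real m ^ k"
    unfolding eventually_sequentially by blast
  define C where "C = (\<Sum>m<N. \<bar>g m\<bar>)"
  have "(\<lambda>n. C / real n ^ Suc k) \<longlonglongrightarrow> 0"
    by (intro tendsto_divide_0[OF tendsto_const] filterlim_at_top_imp_at_infinity
        filterlim_pow_at_top filterlim_real_sequentially) simp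
  then have "\<forall>\<^sub>F n in sequentially. C / real n ^ Suc k < r / 2"
    using \<open>0 < r\<close> by (intro order_tendstoD(2)) auto
  then show "\<forall>\<^sub>F n in sequentially. dist ((\<Sum>m<n. g m) / real n ^ Suc k) 0 < r"
    using eventually_gt_at_top[of 0]
  proof eventually_elim
    case (elim n)
    have "\<bar>\<Sum>m<n. g m\<bar> / real n ^ Suc k \<le> (C + r / 2 * real n ^ Suc k) / real n ^ Suc k"
      using abs_sum_lessThan_le[OF N, of n] \<open>0 < r\<close> unfolding C_def
      by (intro divide_right_mono) auto
    also have "\<dots> = C / real n ^ Suc k + r / 2"
      using elim by (simp add: add_divide_distrib del: power_Suc)
    finally have "\<bar>\<Sum>m<n. g m\<bar> / real n ^ Suc k < r"
      using elim(1) by linarith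
    then show ?case
      by (simp add: abs_divide)
  qed
qed

lemma cesaro_power:
  fixes f :: "nat \<Rightarrow> real"
  assumes "(\<lambda>n. f n / real n ^ k) \<longlonglongrightarrow> a"
  shows "(\<lambda>n. (\<Sum>m<n. f m) / real n ^ Suc k) \<longlonglongrightarrow> a / real (Suc k)"
proof -
  define g where "g m = f m - a * real m ^ k" for m
  have "\<forall>\<^sub>F n in sequentially. f n / real n ^ k - a = g n / real n ^ k"
    using eventually_gt_at_top[of 0] by eventually_elim (simp add: g_def field_simps)
  then have "(\<lambda>n. g n / real n ^ k) \<longlonglongrightarrow> 0"
    using Lim_transform_eventually tendsto_diff[OF assms tendsto_const[of a]] by fastforce
  then have "(\<lambda>n. (\<Sum>m<n. g m) / real n ^ Suc k + a * ((\<Sum>m<n. real m ^ k) / real n ^ Suc k))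
      \<longlonglongrightarrow> 0 + a * (1 / real (Suc k))"
    by (intro tendsto_add tendsto_mult tendsto_const cesaro_power_zero sum_power_lessThan_asymp)
  moreover have "(\<Sum>m<n. g m) / real n ^ Suc k + a * ((\<Sum>m<n. real m ^ k) / real n ^ Suc k)
      = (\<Sum>m<n. f m) / real n ^ Suc k" for n
    by (simp add: g_def sum_subtractf sum_distrib_left add_divide_distrib diff_divide_distrib)
  ultimately show ?thesis
    by simp
qed

section \<open>Lattice points of the l1-ball\<close>

lemma abs_le_l1norm: "i < d \<Longrightarrow> \<bar>x i\<bar> \<le> l1norm d x"
  unfolding l1norm_def by (rule member_le_sum) auto

lemma l1norm_nonneg: "0 \<le> l1norm d x"
  unfolding l1norm_def by (simp add: sum_nonneg)

lemma l1norm_uminus: "l1norm d (- x) = l1norm d x"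
  by (simp add: l1norm_def)

lemma l1norm_scale: "l1norm d (\<lambda>i. c * x i) = \<bar>c\<bar> * l1norm d x"
  by (simp add: l1norm_def abs_mult sum_distrib_left)

lemma l1norm_Suc: "l1norm (Suc d) x = l1norm d x + \<bar>x d\<bar>"
  by (simp add: l1norm_def)

lemma ball1_0: "ball1 0 n = {\<lambda>_. 0}"
  by (auto simp: ball1_def lattice_pts_def l1norm_def)

lemma ball1_mono: "m \<le> n \<Longrightarrow> ball1 d m \<subseteq> ball1 d n"
  by (auto simp: ball1_def)

lemma ball1_Suc:
  "ball1 (Suc d) n = (\<Union>t\<in>{-int n..int n}. (\<lambda>x. x(d := t)) ` ball1 d (nat (int n - \<bar>t\<bar>)))"
proof (intro equalityI subsetI)
  fix y
  assume y: "y \<in> ball1 (Suc d) n"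
  then have "\<bar>y d\<bar> \<le> int n"
    using abs_le_l1norm[of d "Suc d" y] by (simp add: ball1_def)
  moreover have "l1norm d (y(d := 0)) = l1norm d y"
    by (simp add: l1norm_def)
  ultimately have "y(d := 0) \<in> ball1 d (nat (int n - \<bar>y d\<bar>))"
    using y l1norm_Suc[of d y] by (auto simp: ball1_def lattice_pts_def)
  moreover have "y = (y(d := 0))(d := y d)"
    by simp
  ultimately show "y \<in> (\<Union>t\<in>{-int n..int n}. (\<lambda>x. x(d := t)) ` ball1 d (nat (int n - \<bar>t\<bar>)))"
    using \<open>\<bar>y d\<bar> \<le> int n\<close> by (intro UN_I[of "y d"] image_eqI) auto
next
  fix y
  assume "y \<in> (\<Union>t\<in>{-int n..int n}. (\<lambda>x. x(d := t)) ` ball1 d (nat (int n - \<bar>t\<bar>)))"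
  then obtain t x where "t \<in> {-int n..int n}" and x: "x \<in> ball1 d (nat (int n - \<bar>t\<bar>))"
    and y: "y = x(d := t)"
    by blast
  then have t: "\<bar>t\<bar> \<le> int n"
    by auto
  have "l1norm (Suc d) y = l1norm d x + \<bar>t\<bar>"
    using x y by (simp add: l1norm_def ball1_def lattice_pts_def)
  then show "y \<in> ball1 (Suc d) n"
    using x y t by (auto simp: ball1_def lattice_pts_def)
qed

lemma finite_ball1: "finite (ball1 d n)"
proof (induction d arbitrary: n)
  case 0
  then show ?case by (simp add: ball1_0)
next
  case (Suc d)
  then show ?case by (simp add: ball1_Suc)
qed

lemma sum_abs_atLeastAtMost_int:
  fixes h :: "int \<Rightarrow> 'a::comm_monoid_add"
  shows "(\<Sum>t\<in>{-int n..int n}. h \<bar>t\<bar>) = h 0 + (\<Sum>j\<in>{1..n}. h (int j) + h (int j))"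
proof (induction n)
  case (Suc n)
  have "{-int (Suc n)..int (Suc n)} = insert (-int (Suc n)) (insert (int (Suc n)) {-int n..int n})"
    by auto
  then show ?case
    using Suc by (simp add: add_ac)
qed simp

lemma card_ball1_Suc:
  "real (card (ball1 (Suc d) n)) = real (card (ball1 d n)) + 2 * (\<Sum>m<n. real (card (ball1 d m)))"
proof -
  let ?slice = "\<lambda>t. (\<lambda>x. x(d := t)) ` ball1 d (nat (int n - \<bar>t\<bar>))"
  have "inj_on (\<lambda>x. x(d := t)) (ball1 d m)" for t m
  proof (rule inj_onI)
    fix x y
    assume "x \<in> ball1 d m" "y \<in> ball1 d m" "x(d := t) = y(d := t)"
    moreover have "x d = 0" "y d = 0"
      using calculation(1,2) by (simp_all add: ball1_def lattice_pts_def)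
    ultimately show "x = y"
      by (metis fun_upd_triv fun_upd_upd)
  qed
  then have card_slice: "card (?slice t) = card (ball1 d (nat (int n - \<bar>t\<bar>)))" for t
    by (rule card_image)
  have "card (ball1 (Suc d) n) = (\<Sum>t\<in>{-int n..int n}. card (?slice t))"
    unfolding ball1_Suc
    by (rule card_UN_disjoint) (auto simp: finite_ball1 dest: fun_cong[of _ _ d])
  then have "real (card (ball1 (Suc d) n))
      = (\<Sum>t\<in>{-int n..int n}. real (card (ball1 d (nat (int n - \<bar>t\<bar>)))))"
    unfolding card_slice by simp
  also have "\<dots> = real (card (ball1 d n)) + 2 * (\<Sum>j\<in>{1..n}. real (card (ball1 d (n - j))))"
    using sum_abs_atLeastAtMost_int[of "\<lambda>a. real (card (ball1 d (nat (int n - a))))" n]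
    by (simp add: sum_distrib_left nat_diff_distrib)
  also have "(\<Sum>j\<in>{1..n}. real (card (ball1 d (n - j)))) = (\<Sum>m<n. real (card (ball1 d m)))"
    by (rule sum.reindex_bij_witness[of _ "\<lambda>j. n - j" "\<lambda>j. n - j"]) auto
  finally show ?thesis .
qed

lemma card_ball1_asymp: "(\<lambda>n. real (card (ball1 d n)) / real n ^ d) \<longlonglongrightarrow> 2 ^ d / fact d"
proof (induction d)
  case 0
  then show ?case by (simp add: ball1_0)
next
  case (Suc d)
  have "(\<lambda>n. real (card (ball1 d n)) / real n ^ d * (1 / real n)
            + 2 * ((\<Sum>m<n. real (card (ball1 d m))) / real n ^ Suc d))
        \<longlonglongrightarrow> 2 ^ d / fact d * 0 + 2 * (2 ^ d / fact d / real (Suc d))"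
    using lim_inverse_n'
    by (intro tendsto_add tendsto_mult tendsto_const cesaro_power Suc) (simp_all add: inverse_eq_divide)
  moreover have "\<forall>\<^sub>F n in sequentially.
      real (card (ball1 d n)) / real n ^ d * (1 / real n)
        + 2 * ((\<Sum>m<n. real (card (ball1 d m))) / real n ^ Suc d)
      = real (card (ball1 (Suc d) n)) / real n ^ Suc d"
    using eventually_gt_at_top[of 0]
    by eventually_elim (simp add: card_ball1_Suc add_divide_distrib)
  ultimately show ?case
    by (auto simp: field_simps dest: Lim_transform_eventually)
qed

lemma sum_l1norm_ball1:
  "(\<Sum>x\<in>ball1 d n. real_of_int (l1norm d x))
     = real n * real (card (ball1 d n)) - (\<Sum>m<n. real (card (ball1 d m)))"
proof -
  have norm_eq: "real_of_int (l1norm d x) = (\<Sum>m<n. of_bool (x \<notin> ball1 d m))"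
    if "x \<in> ball1 d n" for x
  proof -
    have "{m. m < n \<and> x \<notin> ball1 d m} = {..<nat (l1norm d x)}"
      using that l1norm_nonneg[of d x] by (auto simp: ball1_def)
    then show ?thesis
      using l1norm_nonneg[of d x] by (simp add: sum_of_bool_eq Collect_conj_eq lessThan_def)
  qed
  have "(\<Sum>x\<in>ball1 d n. real_of_int (l1norm d x))
      = (\<Sum>m<n. \<Sum>x\<in>ball1 d n. of_bool (x \<notin> ball1 d m))"
    by (simp add: norm_eq sum.swap[of _ _ "{..<n}"] cong: sum.cong del: of_bool_not_iff)
  also have "\<dots> = (\<Sum>m<n. real (card (ball1 d n)) - real (card (ball1 d m)))"
  proof (rule sum.cong)
    fix m
    assume "m \<in> {..<n}"
    then have "ball1 d m \<subseteq> ball1 d n"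
      by (simp add: ball1_mono)
    moreover have "ball1 d n \<inter> {x. x \<notin> ball1 d m} = ball1 d n - ball1 d m"
      by blast
    ultimately show "(\<Sum>x\<in>ball1 d n. of_bool (x \<notin> ball1 d m))
        = real (card (ball1 d n)) - real (card (ball1 d m))"
      using sum_of_bool_eq[OF finite_ball1, of d n "\<lambda>x. x \<notin> ball1 d m"]
      by (simp add: finite_ball1 card_Diff_subset card_mono of_nat_diff)
  qed simp
  finally show ?thesis
    by (simp add: sum_subtractf)
qed

lemma sum_l1norm_ball1_asymp:
  "(\<lambda>n. (\<Sum>x\<in>ball1 d n. real_of_int (l1norm d x)) / real n ^ Suc d)
     \<longlonglongrightarrow> 2 ^ d * real d / fact (Suc d)"
proof -
  have "(\<lambda>n. real (card (ball1 d n)) / real n ^ d - (\<Sum>m<n. real (card (ball1 d m))) / real n ^ Suc d)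
      \<longlonglongrightarrow> 2 ^ d / fact d - 2 ^ d / fact d / real (Suc d)"
    by (intro tendsto_diff card_ball1_asymp cesaro_power)
  moreover have "\<forall>\<^sub>F n in sequentially.
      real (card (ball1 d n)) / real n ^ d - (\<Sum>m<n. real (card (ball1 d m))) / real n ^ Suc d
      = (\<Sum>x\<in>ball1 d n. real_of_int (l1norm d x)) / real n ^ Suc d"
    using eventually_gt_at_top[of 0]
    by eventually_elim (simp add: sum_l1norm_ball1 diff_divide_distrib)
  moreover have "(2::real) ^ d / fact d - 2 ^ d / fact d / real (Suc d) = 2 ^ d * real d / fact (Suc d)"
    by (simp add: divide_simps) (simp add: algebra_simps)
  ultimately show ?thesis
    by (auto dest: Lim_transform_eventually)
qed

section \<open>Primitive points\<close>

definition prim_ball1 :: "nat \<Rightarrow> nat \<Rightarrow> (nat \<Rightarrow> int) set" where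
  "prim_ball1 d p = ball1 d p \<inter> Collect (primitive d)"

lemma finite_prim_ball1: "finite (prim_ball1 d p)"
  by (simp add: prim_ball1_def finite_ball1)

lemma prim_ball1_mono: "p \<le> p' \<Longrightarrow> prim_ball1 d p \<subseteq> prim_ball1 d p'"
  unfolding prim_ball1_def using ball1_mono by blast

lemma primitive_uminus:
  assumes "primitive d x"
  shows "primitive d (- x)"
proof -
  have "(- x) ` {..<d} = uminus ` x ` {..<d}"
    by auto
  then show ?thesis
    using assms by (simp add: primitive_def lattice_pts_def)
qed

lemma primitive_imp_nonzero:
  assumes "primitive d x"
  shows "\<exists>i<d. x i \<noteq> 0"
proof (rule ccontr)
  assume "\<not> (\<exists>i<d. x i \<noteq> 0)"
  then have "Gcd (x ` {..<d}) = 0"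
    by auto
  then show False
    using assms by (simp add: primitive_def del: Gcd_0_iff)
qed

lemma prim_pos_or_uminus:
  assumes "primitive d x"
  shows "x \<in> prim_pos d \<or> - x \<in> prim_pos d"
proof -
  obtain i0 where "i0 < d" "x i0 \<noteq> 0"
    using primitive_imp_nonzero[OF assms] by blast
  define i where "i = (LEAST i. x i \<noteq> 0)"
  have "x i \<noteq> 0"
    unfolding i_def by (rule LeastI) fact
  moreover have "i < d"
    using Least_le[of "\<lambda>i. x i \<noteq> 0" i0] \<open>x i0 \<noteq> 0\<close> \<open>i0 < d\<close> by (simp add: i_def)
  moreover have "\<forall>j<i. x j = 0"
    unfolding i_def using not_less_Least by blast
  ultimately
  show ?thesis
    using assms primitive_uminus[OF assms] by (cases "x i > 0") (auto simp: prim_pos_def)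
qed

lemma uminus_notin_prim_pos:
  assumes "x \<in> prim_pos d"
  shows "- x \<notin> prim_pos d"
proof
  assume "- x \<in> prim_pos d"
  then obtain k where k: "x k < 0" "\<forall>j<k. x j = 0"
    by (auto simp: prim_pos_def)
  obtain i where i: "x i > 0" "\<forall>j<i. x j = 0"
    using assms by (auto simp: prim_pos_def)
  from i k show False
    by (cases i k rule: linorder_cases) auto
qed

lemma sum_prim_ball1_prim_pos:
  "(\<Sum>x\<in>prim_ball1 d p. f x) = (\<Sum>x\<in>prim_ball1 d p \<inter> prim_pos d. f x + f (- x))"
proof -
  let ?A = "prim_ball1 d p \<inter> prim_pos d"
  have "prim_ball1 d p = ?A \<union> uminus ` ?A"
  proof (intro equalityI subsetI)
    fix x
    assume x: "x \<in> prim_ball1 d p"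
    then have "- x \<in> prim_ball1 d p" "x = - (- x)"
      by (auto simp: prim_ball1_def ball1_def lattice_pts_def l1norm_uminus primitive_uminus)
    then show "x \<in> ?A \<union> uminus ` ?A"
      using x prim_pos_or_uminus[of d x] by (auto simp: prim_ball1_def)
  qed (auto simp: prim_ball1_def ball1_def lattice_pts_def l1norm_uminus primitive_uminus)
  then have "sum f (prim_ball1 d p) = sum f (?A \<union> uminus ` ?A)"
    by (rule arg_cong)
  also have "\<dots> = sum f ?A + sum f (uminus ` ?A)"
    using uminus_notin_prim_pos finite_prim_ball1[of d p] by (intro sum.union_disjoint) auto
  also have "sum f (uminus ` ?A) = (\<Sum>x\<in>?A. f (- x))"
    by (rule sum.reindex_cong[of uminus]) (auto simp: inj_on_def fun_eq_iff)
  finally show ?thesis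
    by (simp add: sum.distrib)
qed

lemma sum_abs_coord_prim_ball1:
  assumes "i < d" "j < d"
  shows "(\<Sum>x\<in>prim_ball1 d p. \<bar>x i\<bar>) = (\<Sum>x\<in>prim_ball1 d p. \<bar>x j\<bar>)"
proof -
  let ?\<tau> = "Transposition.transpose i j"
  have "x \<circ> ?\<tau> \<in> prim_ball1 d p" if x: "x \<in> prim_ball1 d p" for x
  proof -
    have bij: "bij_betw ?\<tau> {..<d} {..<d}"
      using assms by simp
    have "l1norm d (x \<circ> ?\<tau>) = l1norm d x"
      unfolding l1norm_def using sum.reindex_bij_betw[OF bij, of "\<lambda>k. \<bar>x k\<bar>"] by simp
    moreover have "(x \<circ> ?\<tau>) ` {..<d} = x ` {..<d}"
      using bij by (metis bij_betw_def image_comp)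
    moreover have "\<forall>k\<ge>d. x (?\<tau> k) = 0"
      using x assms by (auto simp: prim_ball1_def ball1_def lattice_pts_def transpose_def)
    ultimately show ?thesis
      using x by (auto simp: prim_ball1_def ball1_def lattice_pts_def primitive_def)
  qed
  then have "bij_betw (\<lambda>x. x \<circ> ?\<tau>) (prim_ball1 d p) (prim_ball1 d p)"
    by (intro bij_betw_byWitness[where f' = "\<lambda>x. x \<circ> ?\<tau>"]) (auto simp: comp_assoc)
  then have "(\<Sum>x\<in>prim_ball1 d p. \<bar>x j\<bar>) = (\<Sum>x\<in>prim_ball1 d p. \<bar>(x \<circ> ?\<tau>) j\<bar>)"
    by (rule sum.reindex_bij_betw[symmetric])
  then show ?thesis
    by simp
qed

lemma kappa_eq_sum_l1norm:
  assumes "0 < d"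
  shows "2 * int d * kappa d p = (\<Sum>x\<in>prim_ball1 d p. l1norm d x)"
proof -
  define F where "F = (\<Sum>x\<in>prim_ball1 d p. \<bar>x 0\<bar>)"
  have coord: "(\<Sum>x\<in>prim_ball1 d p. \<bar>x i\<bar>) = F" if "i < d" for i
    unfolding F_def using that assms by (rule sum_abs_coord_prim_ball1)
  have "prim_ball1 d p \<inter> prim_pos d = ball1 d p \<inter> prim_pos d"
    by (auto simp: prim_ball1_def prim_pos_def)
  moreover have "F = (\<Sum>x\<in>prim_ball1 d p \<inter> prim_pos d. \<bar>x i\<bar> + \<bar>(- x) i\<bar>)" if "i < d" for i
    using coord[OF that] sum_prim_ball1_prim_pos[of "\<lambda>x. \<bar>x i\<bar>" d p] by (simp only:)
  ultimately have "F = (\<Sum>x\<in>ball1 d p \<inter> prim_pos d. \<bar>x i\<bar> + \<bar>x i\<bar>)" if "i < d" for i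
    using that by simp
  then have "F = 2 * (\<Sum>x\<in>ball1 d p \<inter> prim_pos d. \<bar>x i\<bar>)" if "i < d" for i
    using that by (simp only: mult_2 sum.distrib)
  then have "even F"
    and "(\<lambda>i. \<Sum>x\<in>ball1 d p \<inter> prim_pos d. \<bar>x i\<bar>) ` {..<d} = (\<lambda>i. F div 2) ` {..<d}"
    using assms by (auto intro!: image_cong)
  moreover have "(\<lambda>i. F div 2) ` {..<d} = {F div 2}"
    using assms by auto
  moreover have "(\<Sum>x\<in>prim_ball1 d p. l1norm d x) = (\<Sum>i<d. \<Sum>x\<in>prim_ball1 d p. \<bar>x i\<bar>)"
    unfolding l1norm_def by (rule sum.swap)
  then have "(\<Sum>x\<in>prim_ball1 d p. l1norm d x) = int d * F"
    by (simp add: coord)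
  ultimately show ?thesis
    by (simp add: kappa_def kappa_set_def)
qed

lemma Gcd_scale_primitive:
  assumes "primitive d y"
  shows "Gcd ((\<lambda>i. int g * y i) ` {..<d}) = int g"
proof -
  have "(\<lambda>i. int g * y i) ` {..<d} = (*) (int g) ` y ` {..<d}"
    by auto
  then show ?thesis
    using assms by (simp add: Gcd_mult primitive_def)
qed

lemma lattice_pts_eq_scale_primitive:
  assumes x: "x \<in> lattice_pts d" and "x i \<noteq> 0" "i < d"
  obtains g y where "1 \<le> g" "primitive d y" "x = (\<lambda>k. int g * y k)"
proof -
  define G where "G = Gcd (x ` {..<d})"
  have "G \<noteq> 0"
    using assms by (auto simp: G_def)
  then have "0 < G"
    using Gcd_int_greater_eq_0 G_def by (metis order_le_less)
  define y where "y i = x i div G" for i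
  have x_eq: "x = (\<lambda>i. G * y i)"
  proof
    fix k
    show "x k = G * y k"
    proof (cases "k < d")
      case True
      then have "G dvd x k"
        unfolding G_def by (intro Gcd_dvd) auto
      then show ?thesis
        by (simp add: y_def)
    next
      case False
      then show ?thesis
        using x by (simp add: y_def lattice_pts_def)
    qed
  qed
  have "x ` {..<d} = (*) G ` y ` {..<d}"
    by (subst x_eq) auto
  then have "G = normalize (G * Gcd (y ` {..<d}))"
    unfolding G_def by (metis Gcd_mult)
  then have "G = G * Gcd (y ` {..<d})"
    using \<open>0 < G\<close> by (simp add: abs_mult)
  then have "Gcd (y ` {..<d}) = 1"
    using \<open>0 < G\<close> by simp
  moreover have "y \<in> lattice_pts d"
    using x by (auto simp: lattice_pts_def y_def)
  ultimately have "primitive d y"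
    by (simp add: primitive_def)
  then show ?thesis
    using that[of "nat G" y] x_eq \<open>0 < G\<close> by simp
qed

lemma ball1_minus_zero_eq_UN:
  "ball1 d p - {\<lambda>_. 0} = (\<Union>g\<in>{1..p}. (\<lambda>y i. int g * y i) ` prim_ball1 d (p div g))"
proof (intro equalityI subsetI)
  fix x
  assume "x \<in> ball1 d p - {\<lambda>_. 0}"
  then have x: "x \<in> lattice_pts d" "l1norm d x \<le> int p" "x \<noteq> (\<lambda>_. 0)"
    by (auto simp: ball1_def)
  then obtain i where "i < d" "x i \<noteq> 0"
    by (auto simp: lattice_pts_def fun_eq_iff) (metis not_le)
  then obtain g y where g: "1 \<le> g" and y: "primitive d y" and x_eq: "x = (\<lambda>i. int g * y i)"
    using lattice_pts_eq_scale_primitive x(1) by blast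
  obtain n where n: "l1norm d y = int n"
    using l1norm_nonneg zero_le_imp_eq_int by blast
  have "1 \<le> n"
    using primitive_imp_nonzero[OF y] abs_le_l1norm[of _ d y] n by fastforce
  have "g * n \<le> p"
    using x(2) by (simp add: x_eq l1norm_scale n flip: of_nat_mult)
  then have "g \<le> p" and "n \<le> p div g"
    using \<open>1 \<le> n\<close> g
    by (simp_all add: less_eq_div_iff_mult_less_eq mult.commute order_trans[OF _ \<open>g * n \<le> p\<close>])
  then show "x \<in> (\<Union>g\<in>{1..p}. (\<lambda>y i. int g * y i) ` prim_ball1 d (p div g))"
    using g y n x_eq by (intro UN_I[of g] image_eqI[of _ _ y]) (auto simp: prim_ball1_def ball1_def primitive_def)
next
  fix x
  assume "x \<in> (\<Union>g\<in>{1..p}. (\<lambda>y i. int g * y i) ` prim_ball1 d (p div g))"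
  then obtain g y where g: "1 \<le> g" "g \<le> p" and y: "y \<in> prim_ball1 d (p div g)"
    and x_eq: "x = (\<lambda>i. int g * y i)"
    by auto
  have "l1norm d x = int g * l1norm d y"
    by (simp add: x_eq l1norm_scale)
  also have "\<dots> \<le> int (g * (p div g))"
    using y by (auto simp: prim_ball1_def ball1_def intro: mult_left_mono)
  also have "\<dots> \<le> int p"
    by (metis of_nat_le_iff times_div_less_eq_dividend)
  finally have "l1norm d x \<le> int p" .
  moreover obtain i where "i < d" "y i \<noteq> 0"
    using y primitive_imp_nonzero by (auto simp: prim_ball1_def)
  ultimately show "x \<in> ball1 d p - {\<lambda>_. 0}"
    using y g by (auto simp: x_eq ball1_def lattice_pts_def prim_ball1_def fun_eq_iff)
qed

lemma sum_l1norm_ball1_divisor_sum: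
  "(\<Sum>x\<in>ball1 d p. real_of_int (l1norm d x))
     = (\<Sum>g\<in>{1..p}. real g * (\<Sum>y\<in>prim_ball1 d (p div g). real_of_int (l1norm d y)))"
proof -
  let ?f = "\<lambda>x. real_of_int (l1norm d x)" and ?scale = "\<lambda>g y i. int g * y i"
  have "(\<lambda>_. 0) \<in> ball1 d p"
    by (simp add: ball1_def lattice_pts_def l1norm_def)
  then have "sum ?f (ball1 d p) = sum ?f (ball1 d p - {\<lambda>_. 0})"
    by (simp add: sum.remove[OF finite_ball1] l1norm_def)
  also have "\<dots> = (\<Sum>g\<in>{1..p}. sum ?f (?scale g ` prim_ball1 d (p div g)))"
    unfolding ball1_minus_zero_eq_UN
  proof (rule sum.UNION_disjoint)
    show "\<forall>g\<in>{1..p}. \<forall>h\<in>{1..p}. g \<noteq> h \<longrightarrow>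
        ?scale g ` prim_ball1 d (p div g) \<inter> ?scale h ` prim_ball1 d (p div h) = {}"
    proof (intro ballI impI equals0I)
      fix g h x
      assume "g \<noteq> h" and "x \<in> ?scale g ` prim_ball1 d (p div g) \<inter> ?scale h ` prim_ball1 d (p div h)"
      then obtain y z where "primitive d y" "primitive d z" "?scale g y = ?scale h z"
        by (auto simp: prim_ball1_def)
      then have "int g = int h"
        by (metis Gcd_scale_primitive)
      with \<open>g \<noteq> h\<close> show False
        by simp
    qed
  qed (simp_all add: finite_prim_ball1)
  also have "\<dots> = (\<Sum>g\<in>{1..p}. real g * (\<Sum>y\<in>prim_ball1 d (p div g). ?f y))"
  proof (rule sum.cong)
    fix g :: nat
    assume "g \<in> {1..p}"
    then have "sum ?f (?scale g ` prim_ball1 d (p div g)) = (\<Sum>y\<in>prim_ball1 d (p div g). real g * ?f y)"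
      by (intro sum.reindex_cong[of "?scale g"]) (auto simp: inj_on_def fun_eq_iff l1norm_scale)
    then show "sum ?f (?scale g ` prim_ball1 d (p div g)) = real g * (\<Sum>y\<in>prim_ball1 d (p div g). ?f y)"
      by (simp add: sum_distrib_left)
  qed simp
  finally show ?thesis .
qed

section \<open>Asymptotic inversion of a divisor sum\<close>

definition zeta_partial :: "nat \<Rightarrow> nat \<Rightarrow> real" where
  "zeta_partial s N = (\<Sum>g\<in>{1..N}. 1 / real g ^ s)"

lemma zeta_partial_eq_sum_lessThan: "zeta_partial s N = (\<Sum>n<N. 1 / real (Suc n) ^ s)"
  using sum_bounds_lt_plus1[of "\<lambda>g. 1 / real g ^ s" N] by (simp add: zeta_partial_def)

lemma zeta_partial_split:
  assumes "G \<le> N"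
  shows "zeta_partial s N = zeta_partial s G + (\<Sum>g\<in>{Suc G..N}. 1 / real g ^ s)"
proof -
  have "{1..N} = {1..G} \<union> {Suc G..N}"
    using assms by auto
  then show ?thesis
    unfolding zeta_partial_def by (simp add: sum.union_disjoint)
qed

lemma summable_inverse_Suc_power:
  assumes "2 \<le> s"
  shows "summable (\<lambda>n. 1 / real (Suc n) ^ s)"
  using inverse_power_summable[of s] assms summable_Suc_iff[of "\<lambda>n. inverse (real n ^ s)"]
  by (simp add: inverse_eq_divide)

lemma zeta_partial_tendsto: "2 \<le> s \<Longrightarrow> zeta_partial s \<longlonglongrightarrow> zeta_nat s"
  unfolding zeta_partial_eq_sum_lessThan[abs_def] zeta_nat_def
  by (rule summable_LIMSEQ[OF summable_inverse_Suc_power])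

lemma zeta_partial_le: "2 \<le> s \<Longrightarrow> zeta_partial s N \<le> zeta_nat s"
  unfolding zeta_partial_eq_sum_lessThan zeta_nat_def
  by (rule sum_le_suminf[OF summable_inverse_Suc_power]) auto

lemma zeta_nat_ge_1: "2 \<le> s \<Longrightarrow> 1 \<le> zeta_nat s"
  using zeta_partial_le[of s 1] by (simp add: zeta_partial_def)

text \<open>Compare with the telescoping series of \<open>1 / (2 (n + 1) (n + 2))\<close>.\<close>
lemma zeta_nat_less_2:
  assumes "3 \<le> s"
  shows "zeta_nat s < 2"
proof -
  let ?a = "\<lambda>n. 1 / (2 * (real n + 1))"
  have summable: "summable (\<lambda>n. 1 / real (Suc n) ^ s)"
    using assms by (intro summable_inverse_Suc_power) simp
  have "?a \<longlonglongrightarrow> 0"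
    using tendsto_mult[OF tendsto_const[of "1/2"] LIMSEQ_inverse_real_of_nat]
    by (simp add: inverse_eq_divide add.commute)
  then have telescope: "(\<lambda>n. ?a n - ?a (Suc n)) sums (1 / 2)"
    using telescope_sums'[of ?a 0] by simp
  have "1 / real (Suc (Suc n)) ^ s \<le> ?a n - ?a (Suc n)" for n
  proof -
    let ?m = "real n + 2"
    have "2 * (real n + 1) * ?m \<le> ?m ^ 3"
      by (simp add: power3_eq_cube algebra_simps)
    also have "\<dots> \<le> ?m ^ s"
      using assms by (intro power_increasing) auto
    finally have "1 / ?m ^ s \<le> 1 / (2 * (real n + 1) * ?m)"
      by (intro divide_left_mono) auto
    moreover have "?a n - ?a (Suc n) = 1 / (2 * (real n + 1) * ?m)"
      by (simp add: divide_simps)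
    ultimately show ?thesis
      by (simp add: add.commute)
  qed
  then have "(\<Sum>n. 1 / real (Suc (Suc n)) ^ s) \<le> 1 / 2"
    using summable summable_Suc_iff[of "\<lambda>n. 1 / real (Suc n) ^ s"]
    by (intro sums_le[OF _ summable_sums telescope]) auto
  then show ?thesis
    using suminf_split_head[OF summable] by (simp add: zeta_nat_def)
qed

lemma nat_div_ratio_tendsto:
  assumes "1 \<le> g"
  shows "(\<lambda>p. real (p div g) / real p) \<longlonglongrightarrow> 1 / real g"
proof (rule tendsto_sandwich)
  show "\<forall>\<^sub>F p in sequentially. 1 / real g - 1 / real p \<le> real (p div g) / real p"
    using eventually_gt_at_top[of 0]
  proof eventually_elim
    case (elim p)
    have "p < Suc (p div g) * g"
      using assms by (metis div_less_iff_less_mult lessI less_le_trans zero_less_one)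
    then have "real p \<le> (real (p div g) + 1) * real g"
      by (metis of_nat_Suc of_nat_less_iff of_nat_mult add.commute less_imp_le)
    then have "real p / real g \<le> real (p div g) + 1"
      using assms by (subst pos_divide_le_eq) auto
    then have "(real p / real g - 1) / real p \<le> real (p div g) / real p"
      by (intro divide_right_mono) auto
    then show ?case
      using elim by (simp add: diff_divide_distrib)
  qed
  show "\<forall>\<^sub>F p in sequentially. real (p div g) / real p \<le> 1 / real g"
    using eventually_gt_at_top[of 0]
  proof eventually_elim
    case (elim p)
    have "real (p div g) / real p \<le> (real p / real g) / real p"
      by (intro divide_right_mono of_nat_div_le_of_nat) simp
    then show ?case
      using elim by simp
  qed
  show "(\<lambda>p. 1 / real g - 1 / real p) \<longlonglongrightarrow> 1 / real g"
    using tendsto_diff[OF tendsto_const lim_inverse_n'] by (simp add: inverse_eq_divide)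
qed simp

locale divisor_sum_inversion =
  fixes w v :: "nat \<Rightarrow> real" and s :: nat and A :: real
  assumes v_eq: "\<And>p. v p = (\<Sum>g\<in>{1..p}. real g * w (p div g))"
    and w_nonneg: "\<And>p. 0 \<le> w p"
    and v_asymp: "(\<lambda>p. v p / real p ^ Suc s) \<longlonglongrightarrow> A"
    and three_le_s: "3 \<le> s"
begin

definition weight :: "nat \<Rightarrow> nat \<Rightarrow> real" where
  "weight g p = real g * real (p div g) ^ Suc s / real p ^ Suc s"

definition err :: "nat \<Rightarrow> real" where
  "err q = w q / real q ^ Suc s - A / zeta_nat s"

definition defect :: "nat \<Rightarrow> real" where
  "defect p = v p / real p ^ Suc s - A / zeta_nat s * (\<Sum>g\<in>{1..p}. weight g p)"

lemma two_le_s: "2 \<le> s"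
  using three_le_s by simp

lemma weight_nonneg: "0 \<le> weight g p"
  by (simp add: weight_def)

lemma weight_1: "1 \<le> p \<Longrightarrow> weight 1 p = 1"
  by (simp add: weight_def)

lemma weight_le:
  assumes "1 \<le> g"
  shows "weight g p \<le> 1 / real g ^ s"
proof (cases "p = 0")
  case False
  have "real (p div g) \<le> real p / real g"
    by (simp add: of_nat_div_le_of_nat)
  then have "real g * real (p div g) ^ Suc s / real p ^ Suc s
      \<le> real g * (real p / real g) ^ Suc s / real p ^ Suc s"
    by (intro divide_right_mono mult_left_mono power_mono) auto
  also have "\<dots> = 1 / real g ^ s"
    using False assms by (simp add: power_divide field_simps)
  finally show ?thesis
    by (simp add: weight_def)
qed (simp add: weight_def)

lemma weight_tendsto:
  assumes "1 \<le> g"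
  shows "(\<lambda>p. weight g p) \<longlonglongrightarrow> 1 / real g ^ s"
proof -
  have "(\<lambda>p. real g * (real (p div g) / real p) ^ Suc s) \<longlonglongrightarrow> real g * (1 / real g) ^ Suc s"
    by (intro tendsto_mult tendsto_const tendsto_power nat_div_ratio_tendsto assms)
  moreover have "real g * (1 / real g) ^ Suc s = 1 / real g ^ s"
    using assms by (simp add: power_divide)
  moreover have "weight g p = real g * (real (p div g) / real p) ^ Suc s" for p
    by (simp add: weight_def power_divide)
  ultimately show ?thesis
    by simp
qed

lemma sum_weight_tendsto: "(\<lambda>p. \<Sum>g\<in>{1..p}. weight g p) \<longlonglongrightarrow> zeta_nat s"
proof (rule order_tendstoI)
  fix a
  assume "zeta_nat s < a"
  moreover have "(\<Sum>g\<in>{1..p}. weight g p) \<le> zeta_nat s" for p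
  proof -
    have "(\<Sum>g\<in>{1..p}. weight g p) \<le> zeta_partial s p"
      unfolding zeta_partial_def by (intro sum_mono weight_le) simp
    also have "\<dots> \<le> zeta_nat s"
      by (rule zeta_partial_le[OF two_le_s])
    finally show ?thesis .
  qed
  ultimately show "\<forall>\<^sub>F p in sequentially. (\<Sum>g\<in>{1..p}. weight g p) < a"
    by (intro always_eventually allI) (rule le_less_trans)
next
  fix a
  assume "a < zeta_nat s"
  then have "\<forall>\<^sub>F N in sequentially. a < zeta_partial s N"
    by (rule order_tendstoD(1)[OF zeta_partial_tendsto[OF two_le_s]])
  then obtain G where G: "a < zeta_partial s G"
    unfolding eventually_sequentially by blast
  have "(\<lambda>p. \<Sum>g\<in>{1..G}. weight g p) \<longlonglongrightarrow> zeta_partial s G"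
    unfolding zeta_partial_def by (intro tendsto_sum weight_tendsto) simp
  then have "\<forall>\<^sub>F p in sequentially. a < (\<Sum>g\<in>{1..G}. weight g p)"
    using G by (rule order_tendstoD)
  then show "\<forall>\<^sub>F p in sequentially. a < (\<Sum>g\<in>{1..p}. weight g p)"
    using eventually_ge_at_top[of G]
  proof eventually_elim
    case (elim p)
    have "(\<Sum>g\<in>{1..G}. weight g p) \<le> (\<Sum>g\<in>{1..p}. weight g p)"
      using elim by (intro sum_mono2) (auto simp: weight_nonneg)
    then show ?case
      using elim by linarith
  qed
qed

lemma err_eq:
  assumes "1 \<le> p"
  shows "err p = defect p - (\<Sum>g\<in>{2..p}. weight g p * err (p div g))"
proof -
  have "v p / real p ^ Suc s = (\<Sum>g\<in>{1..p}. weight g p * (w (p div g) / real (p div g) ^ Suc s))"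
    unfolding v_eq sum_divide_distrib
    by (intro sum.cong) (auto simp: weight_def div_eq_0_iff)
  also have "\<dots> = (\<Sum>g\<in>{1..p}. weight g p * err (p div g) + A / zeta_nat s * weight g p)"
    by (intro sum.cong) (simp_all add: err_def algebra_simps)
  also have "\<dots> = (\<Sum>g\<in>{1..p}. weight g p * err (p div g)) + A / zeta_nat s * (\<Sum>g\<in>{1..p}. weight g p)"
    by (simp add: sum.distrib sum_distrib_left)
  also have "(\<Sum>g\<in>{1..p}. weight g p * err (p div g)) = err p + (\<Sum>g\<in>{2..p}. weight g p * err (p div g))"
    using assms weight_1 by (simp add: sum.atLeast_Suc_atMost numeral_2_eq_2)
  finally show ?thesis
    by (simp add: defect_def)
qed

lemma defect_tendsto: "defect \<longlonglongrightarrow> 0"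
proof -
  have "defect \<longlonglongrightarrow> A - A / zeta_nat s * zeta_nat s"
    unfolding defect_def[abs_def]
    by (intro tendsto_diff tendsto_mult tendsto_const v_asymp sum_weight_tendsto)
  then show ?thesis
    using zeta_nat_ge_1[OF two_le_s] by simp
qed

lemma err_bounded: "\<exists>C\<ge>0. \<forall>q. \<bar>err q\<bar> \<le> C"
proof -
  obtain K where "0 < K" and K: "\<And>q. norm (v q / real q ^ Suc s) \<le> K"
    using convergent_imp_Bseq[OF convergentI[OF v_asymp]] by (auto simp: Bseq_def)
  have w_le: "w q / real q ^ Suc s \<le> v q / real q ^ Suc s" for q
  proof (cases "q = 0")
    case False
    then have "w q \<le> v q"
      unfolding v_eq using w_nonneg
      by (intro member_le_sum[where i = 1 and f = "\<lambda>g. real g * w (q div g)", simplified]) auto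
    then show ?thesis
      by (intro divide_right_mono) auto
  qed simp
  have "\<bar>w q / real q ^ Suc s\<bar> \<le> K" for q
  proof -
    have "0 \<le> w q / real q ^ Suc s"
      using w_nonneg by simp
    moreover have "v q / real q ^ Suc s \<le> K"
      using K[of q] by (metis abs_ge_self order_trans real_norm_def)
    ultimately show ?thesis
      using w_le[of q] by (metis abs_of_nonneg order_trans)
  qed
  then have "\<bar>err q\<bar> \<le> K + \<bar>A / zeta_nat s\<bar>" for q
    unfolding err_def by (meson abs_triangle_ineq4 add_mono order_trans order_refl)
  then show ?thesis
    using \<open>0 < K\<close> by (intro exI[of _ "K + \<bar>A / zeta_nat s\<bar>"]) auto
qed

lemma err_tail_bound:
  assumes C: "\<And>q. \<bar>err q\<bar> \<le> C" and \<beta>: "\<forall>q\<ge>Q. \<bar>err q\<bar> \<le> \<beta>"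
    and "0 \<le> \<beta>" "1 \<le> G" "G \<le> p" "G * Q \<le> p"
  shows "\<bar>\<Sum>g\<in>{2..p}. weight g p * err (p div g)\<bar>
           \<le> (zeta_nat s - 1) * \<beta> + C * (zeta_nat s - zeta_partial s G)"
proof -
  let ?b = "\<lambda>g. if g \<le> G then \<beta> else C"
  have "\<bar>weight g p * err (p div g)\<bar> \<le> 1 / real g ^ s * ?b g" if g: "g \<in> {2..p}" for g
  proof -
    have "\<bar>err (p div g)\<bar> \<le> ?b g"
    proof (cases "g \<le> G")
      case True
      have "Q \<le> p div G"
        using assms(4,6) by (simp add: less_eq_div_iff_mult_less_eq mult.commute)
      also have "\<dots> \<le> p div g"
        using True g by (intro div_le_mono2) auto
      finally show ?thesis
        using True \<beta> by simp
    qed (simp add: C)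
    then have "weight g p * \<bar>err (p div g)\<bar> \<le> 1 / real g ^ s * ?b g"
      using weight_le[of g p] g by (intro mult_mono) auto
    then show ?thesis
      using weight_nonneg[of g p] by (simp only: abs_mult abs_of_nonneg)
  qed
  then have "\<bar>\<Sum>g\<in>{2..p}. weight g p * err (p div g)\<bar> \<le> (\<Sum>g\<in>{2..p}. 1 / real g ^ s * ?b g)"
    by (intro order_trans[OF sum_abs sum_mono])
  also have "\<dots> = (\<Sum>g\<in>{2..G}. 1 / real g ^ s * ?b g) + (\<Sum>g\<in>{Suc G..p}. 1 / real g ^ s * ?b g)"
    using assms(4,5) by (subst sum.union_disjoint[symmetric]) (auto intro: sum.cong)
  also have "\<dots> = \<beta> * (zeta_partial s G - 1) + C * (zeta_partial s p - zeta_partial s G)"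
    using assms(4,5) zeta_partial_split[of G p s] zeta_partial_split[of 1 G s]
    by (simp add: sum_distrib_left mult.commute zeta_partial_def numeral_2_eq_2)
  also have "\<dots> \<le> (zeta_nat s - 1) * \<beta> + C * (zeta_nat s - zeta_partial s G)"
    using zeta_partial_le[OF two_le_s] \<open>0 \<le> \<beta>\<close> order_trans[OF abs_ge_zero C]
    by (simp add: mult.commute add_mono mult_left_mono)
  finally show ?thesis .
qed

lemma err_contraction:
  assumes C: "\<And>q. \<bar>err q\<bar> \<le> C" and \<beta>: "\<forall>q\<ge>Q. \<bar>err q\<bar> \<le> \<beta>"
    and "0 \<le> \<beta>" "0 < \<epsilon>"
  shows "\<forall>\<^sub>F p in sequentially. \<bar>err p\<bar> \<le> (zeta_nat s - 1) * \<beta> + \<epsilon>"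
proof -
  have "(\<lambda>G. C * (zeta_nat s - zeta_partial s G)) \<longlonglongrightarrow> C * (zeta_nat s - zeta_nat s)"
    by (intro tendsto_mult tendsto_diff tendsto_const zeta_partial_tendsto two_le_s)
  then have "\<forall>\<^sub>F G in sequentially. C * (zeta_nat s - zeta_partial s G) < \<epsilon> / 2 \<and> 1 \<le> G"
    using \<open>0 < \<epsilon>\<close> by (intro eventually_conj order_tendstoD(2) eventually_ge_at_top) auto
  then obtain G where G: "C * (zeta_nat s - zeta_partial s G) < \<epsilon> / 2" "1 \<le> G"
    unfolding eventually_sequentially by blast
  have "\<forall>\<^sub>F p in sequentially. \<bar>defect p\<bar> < \<epsilon> / 2"
    using tendstoD[OF defect_tendsto, of "\<epsilon> / 2"] \<open>0 < \<epsilon>\<close> by (simp add: dist_real_def)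
  then show ?thesis
    using eventually_ge_at_top[of "G * Q + G"]
  proof eventually_elim
    case (elim p)
    have "G \<le> p" "G * Q \<le> p" "1 \<le> p"
      using elim G by simp_all
    then have "\<bar>\<Sum>g\<in>{2..p}. weight g p * err (p div g)\<bar> \<le> (zeta_nat s - 1) * \<beta> + \<epsilon> / 2"
      using err_tail_bound[OF C \<beta> \<open>0 \<le> \<beta>\<close> \<open>1 \<le> G\<close>] G by fastforce
    then show ?case
      using elim err_eq[OF \<open>1 \<le> p\<close>] by linarith
  qed
qed

lemma err_eventually_le:
  assumes C: "\<And>q. \<bar>err q\<bar> \<le> C" and "0 \<le> C" and "0 < \<epsilon>"
  shows "\<forall>\<^sub>F p in sequentially. \<bar>err p\<bar> \<le> (zeta_nat s - 1) ^ n * C + \<epsilon>"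
  using \<open>0 < \<epsilon>\<close>
proof (induction n arbitrary: \<epsilon>)
  case 0
  then show ?case
    using C by (intro always_eventually allI) (simp add: add_increasing2)
next
  case (Suc n)
  have "0 \<le> zeta_nat s - 1" "zeta_nat s - 1 \<le> 1"
    using zeta_nat_ge_1[OF two_le_s] zeta_nat_less_2[OF three_le_s] by simp_all
  obtain Q where Q: "\<forall>q\<ge>Q. \<bar>err q\<bar> \<le> (zeta_nat s - 1) ^ n * C + \<epsilon> / 2"
    using Suc.IH[of "\<epsilon> / 2"] Suc.prems by (auto simp: eventually_sequentially)
  have "\<forall>\<^sub>F p in sequentially.
      \<bar>err p\<bar> \<le> (zeta_nat s - 1) * ((zeta_nat s - 1) ^ n * C + \<epsilon> / 2) + \<epsilon> / 2"
    using Suc.prems \<open>0 \<le> zeta_nat s - 1\<close> \<open>0 \<le> C\<close> by (intro err_contraction[OF C Q]) auto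
  moreover have "(zeta_nat s - 1) * (\<epsilon> / 2) \<le> \<epsilon> / 2"
    using Suc.prems \<open>0 \<le> zeta_nat s - 1\<close> \<open>zeta_nat s - 1 \<le> 1\<close> by (simp add: mult_left_le_one_le)
  then have "(zeta_nat s - 1) * ((zeta_nat s - 1) ^ n * C + \<epsilon> / 2) + \<epsilon> / 2
      \<le> (zeta_nat s - 1) ^ Suc n * C + \<epsilon>"
    by (simp only: power_Suc mult.assoc distrib_left)
  ultimately show ?case
    by (elim eventually_mono) (rule order_trans)
qed

lemma err_tendsto: "err \<longlonglongrightarrow> 0"
proof (rule tendstoI)
  fix \<epsilon> :: real
  assume "0 < \<epsilon>"
  obtain C where "0 \<le> C" and C: "\<And>q. \<bar>err q\<bar> \<le> C"
    using err_bounded by blast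
  have "\<bar>zeta_nat s - 1\<bar> < 1"
    using zeta_nat_ge_1[OF two_le_s] zeta_nat_less_2[OF three_le_s] by simp
  then have "(\<lambda>n. (zeta_nat s - 1) ^ n * C) \<longlonglongrightarrow> 0 * C"
    by (intro tendsto_mult tendsto_const LIMSEQ_power_zero) simp
  then have "\<forall>\<^sub>F n in sequentially. (zeta_nat s - 1) ^ n * C < \<epsilon> / 2"
    using \<open>0 < \<epsilon>\<close> by (intro order_tendstoD(2)) auto
  then obtain n where "(zeta_nat s - 1) ^ n * C < \<epsilon> / 2"
    unfolding eventually_sequentially by blast
  moreover have "\<forall>\<^sub>F p in sequentially. \<bar>err p\<bar> \<le> (zeta_nat s - 1) ^ n * C + \<epsilon> / 4"
    using err_eventually_le[OF C \<open>0 \<le> C\<close>] \<open>0 < \<epsilon>\<close> by simp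
  ultimately show "\<forall>\<^sub>F p in sequentially. dist (err p) 0 < \<epsilon>"
    using \<open>0 < \<epsilon>\<close> by (elim eventually_mono) (simp add: dist_real_def)
qed

theorem w_asymp: "(\<lambda>p. w p / real p ^ Suc s) \<longlonglongrightarrow> A / zeta_nat s"
  using tendsto_add[OF err_tendsto tendsto_const[of "A / zeta_nat s"]] by (simp add: err_def)

end

section \<open>Growth and jumps of \<open>\<kappa>\<close>\<close>

lemma kappa_asymp:
  assumes "2 < d"
  shows "(\<lambda>p. real_of_int (kappa d p) / real p ^ Suc d) \<longlonglongrightarrow> 2 ^ (d - 1) / (fact (Suc d) * zeta_nat d)"
proof -
  let ?w = "\<lambda>p. \<Sum>x\<in>prim_ball1 d p. real_of_int (l1norm d x)"
  interpret divisor_sum_inversion ?w "\<lambda>p. \<Sum>x\<in>ball1 d p. real_of_int (l1norm d x)" d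
    "2 ^ d * real d / fact (Suc d)"
  proof
    show "\<And>p. (\<Sum>x\<in>ball1 d p. real_of_int (l1norm d x)) = (\<Sum>g\<in>{1..p}. real g * ?w (p div g))"
      by (rule sum_l1norm_ball1_divisor_sum)
    show "\<And>p. 0 \<le> ?w p"
      by (simp add: sum_nonneg l1norm_nonneg)
    show "(\<lambda>p. (\<Sum>x\<in>ball1 d p. real_of_int (l1norm d x)) / real p ^ Suc d)
        \<longlonglongrightarrow> 2 ^ d * real d / fact (Suc d)"
      by (rule sum_l1norm_ball1_asymp)
  qed (use assms in simp)
  have "real_of_int (kappa d p) = ?w p / (2 * real d)" for p
    using arg_cong[OF kappa_eq_sum_l1norm[of d p], of real_of_int] assms by (simp add: field_simps)
  then have "(\<lambda>p. real_of_int (kappa d p) / real p ^ Suc d)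
      = (\<lambda>p. ?w p / real p ^ Suc d / (2 * real d))"
    by (simp add: ac_simps)
  moreover have "(\<lambda>p. ?w p / real p ^ Suc d / (2 * real d))
      \<longlonglongrightarrow> 2 ^ d * real d / fact (Suc d) / zeta_nat d / (2 * real d)"
    by (intro tendsto_divide w_asymp tendsto_const) (use assms in simp)
  moreover have "2 ^ d * real d / fact (Suc d) / zeta_nat d / (2 * real d)
      = 2 ^ (d - 1) / (fact (Suc d) * zeta_nat d)"
    using assms by (simp add: power_eq_if)
  ultimately show ?thesis
    by simp
qed

lemma sum_l1norm_prim_ball1_mono:
  "p \<le> p' \<Longrightarrow> (\<Sum>x\<in>prim_ball1 d p. l1norm d x) \<le> (\<Sum>x\<in>prim_ball1 d p'. l1norm d x)"
  by (intro sum_mono2 finite_prim_ball1 prim_ball1_mono l1norm_nonneg)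

lemma kappa_mono:
  assumes "0 < d" "p \<le> p'"
  shows "kappa d p \<le> kappa d p'"
proof -
  have "2 * int d * kappa d p \<le> 2 * int d * kappa d p'"
    using sum_l1norm_prim_ball1_mono[OF assms(2)] kappa_eq_sum_l1norm[OF assms(1)] by simp
  then show ?thesis
    using assms(1) by simp
qed

lemma kappa_nonneg:
  assumes "0 < d"
  shows "0 \<le> kappa d p"
proof -
  have "0 \<le> 2 * int d * kappa d p"
    unfolding kappa_eq_sum_l1norm[OF assms] by (simp add: sum_nonneg l1norm_nonneg)
  then show ?thesis
    using assms by (simp add: zero_le_mult_iff)
qed

definition axis_point :: "nat \<Rightarrow> int \<Rightarrow> int \<Rightarrow> nat \<Rightarrow> nat \<Rightarrow> int" where
  "axis_point p a b j = (\<lambda>i. if i = 0 then a * (int p - 1) else if i = j then b else 0)"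

lemma axis_point_in_prim_sphere:
  assumes "\<bar>a\<bar> = 1" "\<bar>b\<bar> = 1" "0 < j" "j < d" "1 \<le> p"
  shows "axis_point p a b j \<in> prim_ball1 d p - prim_ball1 d (p - 1)"
    and "l1norm d (axis_point p a b j) = int p"
proof -
  have "\<bar>axis_point p a b j i\<bar> = (if i = 0 then int p - 1 else 0) + (if i = j then 1 else 0)" for i
    using assms by (simp add: axis_point_def abs_mult)
  then show "l1norm d (axis_point p a b j) = int p"
    using assms by (simp add: l1norm_def sum.distrib)
  moreover have "Gcd (axis_point p a b j ` {..<d}) = 1"
    using assms by (intro Gcd_eq_1_I[of b]) (auto simp: axis_point_def abs_eq_iff image_iff intro!: bexI[of _ j])
  ultimately show "axis_point p a b j \<in> prim_ball1 d p - prim_ball1 d (p - 1)"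
    using assms by (auto simp: prim_ball1_def ball1_def lattice_pts_def primitive_def axis_point_def)
qed

lemma axis_point_eq_iff:
  assumes "2 \<le> p" "b \<noteq> 0" "0 < j" "0 < j'"
  shows "axis_point p a b j = axis_point p a' b' j' \<longleftrightarrow> a = a' \<and> b = b' \<and> j = j'"
proof
  assume eq: "axis_point p a b j = axis_point p a' b' j'"
  have "a * (int p - 1) = a' * (int p - 1)"
    using fun_cong[OF eq, of 0] by (simp add: axis_point_def)
  moreover have "b = (if j = j' then b' else 0)"
    using fun_cong[OF eq, of j] assms by (simp add: axis_point_def)
  ultimately show "a = a' \<and> b = b' \<and> j = j'"
    using assms by (auto split: if_splits)
qed simp

text \<open>The eight points \<open>\<plusminus>(p - 1) e\<^sub>0 \<plusminus> e\<^sub>j\<close>, \<open>j \<in> {1, 2}\<close>, are primitive of norm \<open>p\<close>.\<close>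
lemma sum_l1norm_prim_sphere_ge:
  assumes "3 \<le> d" "2 \<le> p"
  shows "8 * int p \<le> (\<Sum>x\<in>prim_ball1 d p - prim_ball1 d (p - 1). l1norm d x)"
proof -
  let ?I = "{1, -1::int} \<times> {1, -1::int} \<times> {1::nat, 2}" and ?pt = "\<lambda>(a, b, j). axis_point p a b j"
  let ?J = "{(a, b, j). \<bar>a\<bar> = 1 \<and> \<bar>b\<bar> = 1 \<and> 0 < j \<and> j < d}"
  have "?I \<subseteq> ?J"
    using assms by (auto simp del: insert_Times_insert)
  moreover have "inj_on ?pt ?J"
    using assms(2) by (auto intro!: inj_onI simp: axis_point_eq_iff)
  ultimately have inj: "inj_on ?pt ?I"
    by (rule inj_on_subset[rotated])
  have pt: "l1norm d (?pt t) = int p" "?pt t \<in> prim_ball1 d p - prim_ball1 d (p - 1)" if "t \<in> ?I" for t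
    using \<open>?I \<subseteq> ?J\<close> that assms axis_point_in_prim_sphere[of _ _ _ d p] by auto
  have "card ?I = 8"
    by (simp add: card_cartesian_product del: insert_Times_insert)
  then have "8 * int p = (\<Sum>t\<in>?I. int p)"
    by (simp only: sum_constant of_nat_numeral)
  also have "\<dots> = (\<Sum>t\<in>?I. l1norm d (?pt t))"
    by (rule sum.cong[OF refl pt(1)[symmetric]])
  also have "\<dots> = (\<Sum>x\<in>?pt ` ?I. l1norm d x)"
    by (rule sum.reindex[OF inj, unfolded comp_def, symmetric])
  also have "\<dots> \<le> (\<Sum>x\<in>prim_ball1 d p - prim_ball1 d (p - 1). l1norm d x)"
    using pt(2) finite_prim_ball1 by (intro sum_mono2 image_subsetI) (auto simp: l1norm_nonneg)
  finally show ?thesis .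
qed

lemma kappa_jump:
  assumes "3 \<le> d" "2 \<le> p"
  shows "4 * int p \<le> int d * (kappa d p - kappa d (p - 1))"
proof -
  have "prim_ball1 d (p - 1) \<subseteq> prim_ball1 d p"
    by (simp add: prim_ball1_mono)
  then have "2 * int d * (kappa d p - kappa d (p - 1))
      = (\<Sum>x\<in>prim_ball1 d p - prim_ball1 d (p - 1). l1norm d x)"
    using assms kappa_eq_sum_l1norm[of d p] kappa_eq_sum_l1norm[of d "p - 1"]
    by (simp add: sum_diff finite_prim_ball1 right_diff_distrib)
  then show ?thesis
    using sum_l1norm_prim_sphere_ge[OF assms] by simp
qed

section \<open>Counting functions of increasing sequences\<close>

lemma power_powr_inverse: "0 < n \<Longrightarrow> 0 \<le> x \<Longrightarrow> ((x::real) ^ n) powr (1 / real n) = x"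
  by (simp add: root_powr_inverse[symmetric] real_root_power_cancel)

lemma powr_ratio_tendsto:
  fixes u f :: "nat \<Rightarrow> real"
  assumes u: "(\<lambda>n. u n / real n ^ m) \<longlonglongrightarrow> c" and "0 < c" "0 < m"
    and f: "(\<lambda>n. f n / real n) \<longlonglongrightarrow> 1"
  shows "(\<lambda>n. f n / u n powr (1 / real m)) \<longlonglongrightarrow> 1 / c powr (1 / real m)"
proof -
  have "(\<lambda>n. (f n / real n) / (u n / real n ^ m) powr (1 / real m)) \<longlonglongrightarrow> 1 / c powr (1 / real m)"
    using \<open>0 < c\<close> by (intro tendsto_divide f tendsto_powr u tendsto_const) auto
  moreover have "\<forall>\<^sub>F n in sequentially.
      (f n / real n) / (u n / real n ^ m) powr (1 / real m) = f n / u n powr (1 / real m)"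
    using order_tendstoD(1)[OF u \<open>0 < c\<close>] eventually_gt_at_top[of 0]
  proof eventually_elim
    case (elim n)
    then have "0 < u n"
      by (simp add: zero_less_divide_iff)
    have "(real n ^ m) powr (1 / real m) = real n"
      using \<open>0 < m\<close> by (simp add: power_powr_inverse)
    then show ?case
      using elim \<open>0 < u n\<close> by (simp add: powr_divide)
  qed
  ultimately show ?thesis
    by (rule Lim_transform_eventually)
qed

lemma add_over_real_tendsto_1: "(\<lambda>n. (real n + b) / real n) \<longlonglongrightarrow> 1"
proof -
  have "(\<lambda>n. 1 + b * (1 / real n)) \<longlonglongrightarrow> 1 + b * 0"
    using lim_inverse_n' by (intro tendsto_add tendsto_mult tendsto_const) (simp add: inverse_eq_divide)
  moreover have "\<forall>\<^sub>F n in sequentially. 1 + b * (1 / real n) = (real n + b) / real n"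
    using eventually_gt_at_top[of 0] by eventually_elim (simp add: field_simps)
  ultimately show ?thesis
    by (simp add: Lim_transform_eventually)
qed

lemma powr_ratio_shift_tendsto:
  fixes u :: "nat \<Rightarrow> real"
  assumes u: "(\<lambda>n. u n / real n ^ m) \<longlonglongrightarrow> c" and "0 < c" "0 < m"
  shows "(\<lambda>n. (real n - a) / u n powr (1 / real m)) \<longlonglongrightarrow> 1 / c powr (1 / real m)"
    and "(\<lambda>n. (real n - a) / u (n - 1) powr (1 / real m)) \<longlonglongrightarrow> 1 / c powr (1 / real m)"
proof -
  show "(\<lambda>n. (real n - a) / u n powr (1 / real m)) \<longlonglongrightarrow> 1 / c powr (1 / real m)"
    using powr_ratio_tendsto[OF u \<open>0 < c\<close> \<open>0 < m\<close> add_over_real_tendsto_1[of "- a"]]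
    unfolding diff_conv_add_uminus .
  have "(\<lambda>n. (real n + (1 - a)) / u n powr (1 / real m)) \<longlonglongrightarrow> 1 / c powr (1 / real m)"
    by (rule powr_ratio_tendsto[OF u \<open>0 < c\<close> \<open>0 < m\<close> add_over_real_tendsto_1])
  moreover have "(\<lambda>n. (real (Suc n) - a) / u (Suc n - 1) powr (1 / real m))
      = (\<lambda>n. (real n + (1 - a)) / u n powr (1 / real m))"
    by (simp add: algebra_simps)
  ultimately show "(\<lambda>n. (real n - a) / u (n - 1) powr (1 / real m)) \<longlonglongrightarrow> 1 / c powr (1 / real m)"
    by (intro LIMSEQ_imp_Suc[of "\<lambda>n. (real n - a) / u (n - 1) powr (1 / real m)"]) (simp only:)
qed

lemma strict_mono_int_ge: "strict_mono (u :: nat \<Rightarrow> int) \<Longrightarrow> u 0 + int n \<le> u n"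
proof (induction n)
  case (Suc n)
  then show ?case
    using strict_monoD[OF Suc.prems, of n "Suc n"] by simp
qed simp

lemma strict_mono_sublevel_eq_lessThan:
  fixes u :: "nat \<Rightarrow> int"
  assumes "strict_mono u"
  shows "{q. u q \<le> k} = {..<card {q. u q \<le> k}}"
proof -
  define N where "N = (LEAST n. k < u n)"
  have "k < u (nat (k - u 0) + 1)"
    using strict_mono_int_ge[OF assms, of "nat (k - u 0) + 1"] by linarith
  then have "k < u N"
    unfolding N_def by (rule LeastI)
  have "u q \<le> k \<longleftrightarrow> q < N" for q
  proof
    assume "u q \<le> k"
    show "q < N"
    proof (rule ccontr)
      assume "\<not> q < N"
      then have "u N \<le> u q"
        using strict_mono_less_eq[OF assms] by simp
      with \<open>k < u N\<close> \<open>u q \<le> k\<close> show False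
        by simp
    qed
  next
    assume "q < N"
    then show "u q \<le> k"
      using not_less_Least[of q "\<lambda>n. k < u n"] by (simp add: N_def)
  qed
  then have "{q. u q \<le> k} = {..<N}"
    by auto
  then show ?thesis
    by simp
qed

lemma finite_sublevel_strict_mono:
  fixes u :: "nat \<Rightarrow> int"
  assumes "strict_mono u"
  shows "finite {q. u q \<le> k}"
  by (subst strict_mono_sublevel_eq_lessThan[OF assms]) simp

lemma strict_mono_sublevel_iff:
  fixes u :: "nat \<Rightarrow> int"
  assumes "strict_mono u"
  shows "u q \<le> k \<longleftrightarrow> q < card {q. u q \<le> k}"
  using strict_mono_sublevel_eq_lessThan[OF assms, of k] by blast

lemma filterlim_card_sublevel:
  fixes u :: "nat \<Rightarrow> int"
  assumes "strict_mono u"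
  shows "filterlim (\<lambda>k. card {q. u q \<le> int k}) at_top sequentially"
  unfolding filterlim_at_top
proof
  fix Z
  show "\<forall>\<^sub>F k in sequentially. Z \<le> card {q. u q \<le> int k}"
    using eventually_ge_at_top[of "nat (u Z)"]
  proof eventually_elim
    case (elim k)
    then have "u Z \<le> int k"
      by linarith
    then show ?case
      using strict_mono_sublevel_iff[OF assms] by (metis less_imp_le)
  qed
qed

lemma card_sublevel_asymp:
  fixes u :: "nat \<Rightarrow> int"
  assumes mono: "strict_mono u" and lim: "(\<lambda>q. real_of_int (u q) / real q ^ m) \<longlonglongrightarrow> c"
    and "0 < c" "0 < m"
  shows "(\<lambda>k. real (card {q. a \<le> q \<and> u q \<le> int k}) / real k powr (1 / real m))
           \<longlonglongrightarrow> 1 / c powr (1 / real m)"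
proof -
  let ?e = "1 / real m"
  define N where "N k = card {q. u q \<le> int k}" for k
  have below_N: "u q \<le> int k \<longleftrightarrow> q < N k" for q k
    unfolding N_def by (rule strict_mono_sublevel_iff[OF mono])
  have "{q. a \<le> q \<and> u q \<le> int k} = {a..<N k}" for k
    using below_N by auto
  then have card_eq: "real (card {q. a \<le> q \<and> u q \<le> int k}) = real (N k) - real a"
    if "a < N k" for k
    using that by (simp add: of_nat_diff)
  have N_top: "filterlim N at_top sequentially"
    unfolding N_def by (rule filterlim_card_sublevel[OF mono])
  note limits = powr_ratio_shift_tendsto[OF lim \<open>0 < c\<close> \<open>0 < m\<close>, of "real a",
      THEN filterlim_compose, OF N_top]
  have "\<forall>\<^sub>F k in sequentially. Suc (a + nat (1 - u 0)) \<le> N k \<and> 0 < k"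
    using N_top by (simp add: filterlim_at_top eventually_conj eventually_gt_at_top)
  moreover have "0 < u n" if "nat (1 - u 0) \<le> n" for n
    using that strict_mono_int_ge[OF mono, of n] by (simp add: nat_le_iff)
  ultimately have "\<forall>\<^sub>F k in sequentially. a < N k \<and> 0 < u (N k - 1) \<and> 0 < k"
    by (elim eventually_mono) auto
  then have "\<forall>\<^sub>F k in sequentially.
      (real (N k) - real a) / real_of_int (u (N k)) powr ?e
        \<le> real (card {q. a \<le> q \<and> u q \<le> int k}) / real k powr ?e \<and>
      real (card {q. a \<le> q \<and> u q \<le> int k}) / real k powr ?e
        \<le> (real (N k) - real a) / real_of_int (u (N k - 1)) powr ?e"
  proof eventually_elim
    case (elim k)
    have "int k < u (N k)" "u (N k - 1) \<le> int k"
      using below_N[of "N k" k] below_N[of "N k - 1" k] elim by auto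
    then have "real k powr ?e \<le> real_of_int (u (N k)) powr ?e"
      and "real_of_int (u (N k - 1)) powr ?e \<le> real k powr ?e"
      using elim by (auto intro: powr_mono2)
    then show ?case
      using elim \<open>int k < u (N k)\<close> by (auto simp: card_eq intro!: divide_left_mono)
  qed
  note bounds = this
  show ?thesis
    by (rule tendsto_sandwich[OF eventually_mono[OF bounds conjunct1]
          eventually_mono[OF bounds conjunct2] limits])
qed

section \<open>The set E\<close>

lemma tendsto_compose_rescaled:
  fixes f :: "nat \<Rightarrow> real" and g :: "nat \<Rightarrow> nat"
  assumes f: "(\<lambda>p. f p / real p ^ s) \<longlonglongrightarrow> c" and g: "filterlim g at_top sequentially"
    and ratio: "(\<lambda>q. real (g q) / real q) \<longlonglongrightarrow> r"
  shows "(\<lambda>q. f (g q) / real q ^ s) \<longlonglongrightarrow> c * r ^ s"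
proof -
  have "(\<lambda>q. f (g q) / real (g q) ^ s * (real (g q) / real q) ^ s) \<longlonglongrightarrow> c * r ^ s"
    by (intro tendsto_mult tendsto_power ratio filterlim_compose[OF f g])
  moreover have "\<forall>\<^sub>F q in sequentially. f (g q) / real (g q) ^ s * (real (g q) / real q) ^ s = f (g q) / real q ^ s"
    using eventually_compose_filterlim[OF eventually_gt_at_top[of 0] g]
    by eventually_elim (simp add: power_divide)
  ultimately show ?thesis
    by (rule Lim_transform_eventually)
qed

definition Eset_lower :: "nat \<Rightarrow> nat \<Rightarrow> int" where
  "Eset_lower d q = kappa d (d * q - 1) + int q"

definition Eset_upper :: "nat \<Rightarrow> nat \<Rightarrow> int" where
  "Eset_upper d q = kappa d (d * q) - int q"

lemma Eset_eq_image:
  assumes "0 < d"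
  shows "Eset d = Eset_lower d ` {2..} \<union> Eset_upper d ` {2..}"
proof -
  have "{p. 0 < p \<and> d dvd p \<and> d \<noteq> p} = (\<lambda>q. d * q) ` {2..}"
  proof (intro equalityI subsetI)
    fix p
    assume "p \<in> {p. 0 < p \<and> d dvd p \<and> d \<noteq> p}"
    then obtain q where "p = d * q" "q \<noteq> 0" "q \<noteq> 1"
      by (auto elim: dvdE)
    then show "p \<in> (\<lambda>q. d * q) ` {2..}"
      by (intro image_eqI[of _ _ q]) auto
  qed (use assms in auto)
  then have "Eset d = (\<Union>q\<in>{2..}. {Eset_lower d q, Eset_upper d q})"
    using assms by (simp add: Eset_def Eset_lower_def Eset_upper_def)
  then show ?thesis
    by blast
qed

lemma strict_mono_Eset_lower:
  assumes "0 < d"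
  shows "strict_mono (Eset_lower d)"
proof (rule strict_monoI)
  fix q q' :: nat
  assume "q < q'"
  then have "kappa d (d * q - 1) \<le> kappa d (d * q' - 1)"
    using assms by (intro kappa_mono diff_le_mono mult_le_mono2) auto
  then show "Eset_lower d q < Eset_lower d q'"
    using \<open>q < q'\<close> by (simp add: Eset_lower_def)
qed

lemma Eset_lower_less_upper:
  assumes "3 \<le> d" "1 \<le> q"
  shows "Eset_lower d q < Eset_upper d q"
proof -
  have "2 \<le> d * q"
    using assms mult_le_mono[OF assms] by simp
  then have "4 * int (d * q) \<le> int d * (kappa d (d * q) - kappa d (d * q - 1))"
    using kappa_jump[OF assms(1)] by blast
  then have "4 * int q \<le> kappa d (d * q) - kappa d (d * q - 1)"
    using assms by (simp add: mult.left_commute)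
  then show ?thesis
    using assms by (simp add: Eset_lower_def Eset_upper_def)
qed

lemma Eset_upper_less_lower:
  assumes "0 < d" "q < q'"
  shows "Eset_upper d q < Eset_lower d q'"
proof -
  have "d * q \<le> d * q' - 1"
    using mult_less_mono2[OF assms(2,1)] by linarith
  then have "kappa d (d * q) \<le> kappa d (d * q' - 1)"
    by (rule kappa_mono[OF assms(1)])
  then show ?thesis
    using assms by (simp add: Eset_lower_def Eset_upper_def)
qed

lemma strict_mono_Eset_upper:
  assumes "3 \<le> d"
  shows "strict_mono (Eset_upper d)"
proof (rule strict_monoI)
  fix q q' :: nat
  assume "q < q'"
  then show "Eset_upper d q < Eset_upper d q'"
    using Eset_upper_less_lower[of d q q'] Eset_lower_less_upper[OF assms, of q'] assms by simp
qed

lemma card_Eset_atLeastAtMost: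
  assumes "3 \<le> d"
  shows "card (Eset d \<inter> {1..int k})
           = card {q. 2 \<le> q \<and> Eset_lower d q \<le> int k} + card {q. 2 \<le> q \<and> Eset_upper d q \<le> int k}"
proof -
  let ?A = "{q. 2 \<le> q \<and> Eset_lower d q \<le> int k}" and ?B = "{q. 2 \<le> q \<and> Eset_upper d q \<le> int k}"
  have mono: "strict_mono (Eset_lower d)" "strict_mono (Eset_upper d)"
    using assms by (simp_all add: strict_mono_Eset_lower strict_mono_Eset_upper)
  have lower_pos: "1 \<le> Eset_lower d q" if "1 \<le> q" for q
    using that assms kappa_nonneg[of d "d * q - 1"] unfolding Eset_lower_def by linarith
  have upper_pos: "1 \<le> Eset_upper d q" if "1 \<le> q" for q
    using lower_pos[OF that] Eset_lower_less_upper[OF assms that] by simp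
  have "Eset d = Eset_lower d ` {2..} \<union> Eset_upper d ` {2..}"
    using assms by (simp add: Eset_eq_image)
  then have "Eset d \<inter> {1..int k} = Eset_lower d ` ?A \<union> Eset_upper d ` ?B"
    using lower_pos upper_pos by auto
  moreover have "finite ?A" "finite ?B"
    using finite_sublevel_strict_mono[OF mono(1), of "int k"] finite_sublevel_strict_mono[OF mono(2), of "int k"]
    by (auto elim: rev_finite_subset)
  moreover have "Eset_lower d ` ?A \<inter> Eset_upper d ` ?B = {}"
  proof -
    have "Eset_lower d q \<noteq> Eset_upper d q'" if "1 \<le> q" "1 \<le> q'" for q q'
    proof (cases "q \<le> q'")
      case True
      then have "Eset_lower d q \<le> Eset_lower d q'"
        using strict_mono_less_eq[OF mono(1)] by simp
      then show ?thesis
        using Eset_lower_less_upper[OF assms that(2)] by simp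
    next
      case False
      then show ?thesis
        using Eset_upper_less_lower[of d q' q] assms by simp
    qed
    then show ?thesis
      by fastforce
  qed
  ultimately show ?thesis
    using strict_mono_imp_inj_on[OF mono(1)] strict_mono_imp_inj_on[OF mono(2)]
    by (simp add: card_Un_disjoint card_image inj_on_subset)
qed

lemma id_over_power_tendsto_0:
  assumes "0 < d"
  shows "(\<lambda>q. real q / real q ^ Suc d) \<longlonglongrightarrow> 0"
proof -
  have "(\<lambda>q. (1 / real q) ^ d) \<longlonglongrightarrow> 0 ^ d"
    using lim_inverse_n' by (intro tendsto_power) (simp add: inverse_eq_divide)
  moreover have "(\<lambda>q. (1 / real q) ^ d) = (\<lambda>q. real q / real q ^ Suc d)"
    using assms by (auto simp: fun_eq_iff power_divide)
  ultimately show ?thesis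
    using assms by (simp add: zero_power)
qed

lemma Eset_lower_asymp:
  assumes "2 < d"
  shows "(\<lambda>q. real_of_int (Eset_lower d q) / real q ^ Suc d)
           \<longlonglongrightarrow> 2 ^ (d - 1) / (fact (Suc d) * zeta_nat d) * real d ^ Suc d"
proof -
  have "(\<lambda>q. real (d * q - 1) / real q) \<longlonglongrightarrow> real d"
  proof -
    have "(\<lambda>q. real d - 1 / real q) \<longlonglongrightarrow> real d - 0"
      using lim_inverse_n' by (intro tendsto_diff tendsto_const) (simp add: inverse_eq_divide)
    moreover have "\<forall>\<^sub>F q in sequentially. real d - 1 / real q = real (d * q - 1) / real q"
      using eventually_gt_at_top[of 0] by eventually_elim (use assms in \<open>simp add: of_nat_diff field_simps\<close>)
    ultimately show ?thesis
      by (simp add: Lim_transform_eventually)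
  qed
  moreover have "strict_mono (\<lambda>q. d * q - 1)"
  proof (rule strict_monoI)
    fix q q' :: nat
    assume "q < q'"
    then have "d * q < d * q'" "d \<le> d * q'"
      using assms by simp_all
    then show "d * q - 1 < d * q' - 1"
      using assms by linarith
  qed
  then have "filterlim (\<lambda>q. d * q - 1) at_top sequentially"
    by (rule filterlim_subseq)
  ultimately have "(\<lambda>q. real_of_int (kappa d (d * q - 1)) / real q ^ Suc d + real q / real q ^ Suc d)
      \<longlonglongrightarrow> 2 ^ (d - 1) / (fact (Suc d) * zeta_nat d) * real d ^ Suc d + 0"
    using assms
    by (intro tendsto_add tendsto_compose_rescaled[OF kappa_asymp] id_over_power_tendsto_0) auto
  then show ?thesis
    by (simp add: Eset_lower_def add_divide_distrib)
qed

lemma Eset_upper_asymp: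
  assumes "2 < d"
  shows "(\<lambda>q. real_of_int (Eset_upper d q) / real q ^ Suc d)
           \<longlonglongrightarrow> 2 ^ (d - 1) / (fact (Suc d) * zeta_nat d) * real d ^ Suc d"
proof -
  have "(\<lambda>q. real (d * q) / real q) \<longlonglongrightarrow> real d"
    by (rule Lim_transform_eventually[OF tendsto_const], rule eventually_mono[OF eventually_gt_at_top[of 0]]) simp
  moreover have "filterlim (\<lambda>q. d * q) at_top sequentially"
    using assms by (intro filterlim_subseq strict_monoI) simp
  ultimately have "(\<lambda>q. real_of_int (kappa d (d * q)) / real q ^ Suc d - real q / real q ^ Suc d)
      \<longlonglongrightarrow> 2 ^ (d - 1) / (fact (Suc d) * zeta_nat d) * real d ^ Suc d - 0"
    using assms
    by (intro tendsto_diff tendsto_compose_rescaled[OF kappa_asymp] id_over_power_tendsto_0) auto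
  then show ?thesis
    by (simp add: Eset_upper_def diff_divide_distrib)
qed

lemma Eset_count_constant:
  assumes "0 < d" "0 < z"
  shows "2 * (1 / (2 ^ (d - 1) / (fact (Suc d) * z) * real d ^ Suc d) powr (1 / real (Suc d)))
           = (4 * fact (Suc d) * z) powr (1 / real (Suc d)) / real d"
proof -
  let ?e = "1 / real (Suc d)" and ?F = "fact (Suc d) :: real"
  have "(2::real) ^ Suc d = 4 * 2 ^ (d - 1)"
    using assms by (cases d) simp_all
  then have "2 ^ Suc d / (2 ^ (d - 1) / (?F * z) * real d ^ Suc d) = 4 * ?F * z / real d ^ Suc d"
    using assms by (simp add: field_simps)
  moreover have "0 < 2 ^ (d - 1) / (?F * z) * real d ^ Suc d"
    using assms by simp
  ultimately have "(2 ^ Suc d) powr ?e / (2 ^ (d - 1) / (?F * z) * real d ^ Suc d) powr ?e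
      = (4 * ?F * z) powr ?e / (real d ^ Suc d) powr ?e"
    using assms by (simp add: powr_divide[symmetric])
  moreover have "(2 ^ Suc d) powr ?e = (2::real)" "(real d ^ Suc d) powr ?e = real d"
    by (rule power_powr_inverse; simp)+
  ultimately have "2 / (2 ^ (d - 1) / (?F * z) * real d ^ Suc d) powr ?e = (4 * ?F * z) powr ?e / real d"
    by simp
  then show ?thesis
    by simp
qed

theorem lemma4p4:
  fixes d :: nat
  assumes "d > 2"
  shows "(\<lambda>k::nat. real (card (Eset d \<inter> {1..int k})) / real k powr (1 / real (d + 1)))
           \<longlonglongrightarrow> (4 * fact (d + 1) * zeta_nat d) powr (1 / real (d + 1)) / real d"
proof -
  let ?c = "2 ^ (d - 1) / (fact (Suc d) * zeta_nat d) * real d ^ Suc d"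
  have "0 < zeta_nat d"
    using zeta_nat_ge_1[of d] assms by simp
  then have "0 < ?c"
    using assms by simp
  have "(\<lambda>k. real (card {q. 2 \<le> q \<and> Eset_lower d q \<le> int k}) / real k powr (1 / real (Suc d))
          + real (card {q. 2 \<le> q \<and> Eset_upper d q \<le> int k}) / real k powr (1 / real (Suc d)))
      \<longlonglongrightarrow> 1 / ?c powr (1 / real (Suc d)) + 1 / ?c powr (1 / real (Suc d))"
    using assms \<open>0 < ?c\<close>
    by (intro tendsto_add card_sublevel_asymp strict_mono_Eset_lower strict_mono_Eset_upper
        Eset_lower_asymp Eset_upper_asymp) simp_all
  then show ?thesis
    using assms Eset_count_constant[OF _ \<open>0 < zeta_nat d\<close>, of d]
    by (simp add: card_Eset_atLeastAtMost add_divide_distrib)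
qed

end
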